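(* Let $g:L_s\to[0,1]$ be a continuous encoding of $[0,1]$ with zero redundancy, and let $x_0\in[0,1]$ be a $g$-unary point with $g$-code $(c_n)$. For $x\neq x_0$ with a $g$-code $(\alpha_n(x))$, let $m=m(x)$ be the index such that $\alpha_m(x)\neq c_m$ and $\alpha_i(x)=c_i$ for all $i<m$. Then $x\to x_0$ if and only if $m\to\infty$; that is, for any sequence $(x_k)$ of points of $[0,1]\setminus\{x_0\}$ (each with a chosen $g$-code), $x_k\to x_0$ if and only if $m(x_k)\to\infty$.
   Context: $A_s=\{0,1,\dots,s-1\}$ ($s\ge2$) and $L_s=A_s\times A_s\times\cdots$ is the space of sequences over $A_s$. An encoding of $[0,1]$ is a surjective map $g:L_s\to[0,1]$; if $g((\alpha_n))=x$, $(\alpha_n)$ is a $g$-code of $x$. The $g$-cylinder of rank $m$ with base $c_1\dots c_m$ is $\Delta^g_{c_1\dots c_m}=\{g((c_1,\dots,c_m,\alpha_1,\alpha_2,\dots)):(\alpha_n)\in L_s\}$. The encoding has zero redundancy if every point has at most two $g$-codes and the set of points with two $g$-codes is at most countable; points with exactly one code are $g$-unary. The encoding is continuous if every $g$-cylinder is an interval and any two distinct cylinders of the same rank have no common interior points. *)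

theory Defs
  imports "HOL-Analysis.Analysis"
begin

text \<open>Sequences over A_s = {0..s-1}, indexed from 0 (alpha 0 is the paper's alpha_1).\<close>
definition seqspace :: "nat \<Rightarrow> (nat \<Rightarrow> nat) set" where
  "seqspace s = {a. \<forall>n. a n < s}"

definition encoding :: "nat \<Rightarrow> ((nat \<Rightarrow> nat) \<Rightarrow> real) \<Rightarrow> bool" where
  "encoding s g \<longleftrightarrow> g ` seqspace s = {0..1}"

definition codes :: "nat \<Rightarrow> ((nat \<Rightarrow> nat) \<Rightarrow> real) \<Rightarrow> real \<Rightarrow> (nat \<Rightarrow> nat) set" where
  "codes s g x = {a \<in> seqspace s. g a = x}"

definition prepend :: "nat list \<Rightarrow> (nat \<Rightarrow> nat) \<Rightarrow> (nat \<Rightarrow> nat)" where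
  "prepend cs a = (\<lambda>n. if n < length cs then cs ! n else a (n - length cs))"

definition cylinder :: "nat \<Rightarrow> ((nat \<Rightarrow> nat) \<Rightarrow> real) \<Rightarrow> nat list \<Rightarrow> real set" where
  "cylinder s g cs = {g (prepend cs a) | a. a \<in> seqspace s}"

definition zero_redundancy :: "nat \<Rightarrow> ((nat \<Rightarrow> nat) \<Rightarrow> real) \<Rightarrow> bool" where
  "zero_redundancy s g \<longleftrightarrow>
     (\<forall>x. finite (codes s g x) \<and> card (codes s g x) \<le> 2) \<and>
     countable {x. card (codes s g x) = 2}"

definition continuous_encoding :: "nat \<Rightarrow> ((nat \<Rightarrow> nat) \<Rightarrow> real) \<Rightarrow> bool" where
  "continuous_encoding s g \<longleftrightarrow>
     (\<forall>cs. set cs \<subseteq> {..<s} \<longrightarrow> is_interval (cylinder s g cs)) \<and>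
     (\<forall>cs ds. set cs \<subseteq> {..<s} \<longrightarrow> set ds \<subseteq> {..<s} \<longrightarrow> length cs = length ds \<longrightarrow> cs \<noteq> ds \<longrightarrow>
        interior (cylinder s g cs) \<inter> interior (cylinder s g ds) = {})"

definition unary :: "nat \<Rightarrow> ((nat \<Rightarrow> nat) \<Rightarrow> real) \<Rightarrow> real \<Rightarrow> bool" where
  "unary s g x \<longleftrightarrow> card (codes s g x) = 1"

text \<open>First index (0-based) where a differs from c.\<close>
definition first_diff :: "(nat \<Rightarrow> nat) \<Rightarrow> (nat \<Rightarrow> nat) \<Rightarrow> nat" where
  "first_diff a c = (LEAST n. a n \<noteq> c n)"

end

theory Submission
  imports Defs
begin

text \<open>Give \<open>L\<^sub>s\<close> the product topology of the discrete factors \<open>A\<^sub>s\<close>. It is compact, and a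
sequence of codes converges to \<open>c\<close> exactly when its index of first disagreement with \<open>c\<close> tends
to infinity. The cylinders along a code \<open>b\<close> are nested intervals, and since every point has only
finitely many codes their intersection is \<open>{g b}\<close>; so they shrink to \<open>g b\<close>, which makes \<open>g\<close>
continuous on \<open>L\<^sub>s\<close>. Hence codes converging to \<open>c\<close> give points converging to \<open>x\<^sub>0\<close>. Conversely, as
\<open>c\<close> is the only code of \<open>x\<^sub>0\<close>, compactness of \<open>L\<^sub>s\<close> and continuity of \<open>g\<close> force the codes of points
converging to \<open>x\<^sub>0\<close> to converge to \<open>c\<close>.\<close>

lemma tendsto_discrete_iff_eventually_eq:
  fixes f :: "'a \<Rightarrow> 'b::discrete_topology"
  shows "(f \<longlongrightarrow> l) F \<longleftrightarrow> eventually (\<lambda>x. f x = l) F"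
  by (simp add: nhds_discrete filterlim_principal)

lemma tendsto_fun_discrete_iff:
  fixes f :: "'a \<Rightarrow> 'i \<Rightarrow> 'b::discrete_topology"
  shows "(f \<longlongrightarrow> l) F \<longleftrightarrow> (\<forall>i. eventually (\<lambda>x. f x i = l i) F)"
proof -
  have "(f \<longlongrightarrow> l) F \<longleftrightarrow> limitin (product_topology (\<lambda>_. euclidean) UNIV) f l F"
    by (simp add: euclidean_product_topology)
  also have "\<dots> \<longleftrightarrow> (\<forall>i. ((\<lambda>x. f x i) \<longlongrightarrow> l i) F)"
    by (simp add: limitin_componentwise)
  finally show ?thesis by (simp add: tendsto_discrete_iff_eventually_eq)
qed

lemma tendsto_compact_unique_preimage:
  fixes f :: "'a::topological_space \<Rightarrow> 'b::t2_space"
  assumes "compact K" "continuous_on K f" and unique: "\<And>y. y \<in> K \<Longrightarrow> f y = f c \<Longrightarrow> y = c"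
    and in_K: "eventually (\<lambda>x. a x \<in> K) F" and lim: "((\<lambda>x. f (a x)) \<longlongrightarrow> f c) F"
  shows "(a \<longlongrightarrow> c) F"
proof (rule topological_tendstoI)
  fix U assume "open U" "c \<in> U"
  have "compact (f ` (K - U))"
    using assms(1,2) \<open>open U\<close> by (meson Diff_subset compact_continuous_image compact_diff continuous_on_subset)
  then have "open (- f ` (K - U))"
    by (simp add: compact_imp_closed open_Compl)
  moreover have "f c \<in> - f ` (K - U)"
    using unique \<open>c \<in> U\<close> by force
  ultimately have "eventually (\<lambda>x. f (a x) \<in> - f ` (K - U)) F"
    using topological_tendstoD[OF lim] by blast
  with in_K show "eventually (\<lambda>x. a x \<in> U) F"
    by eventually_elim blast
qed

lemma nested_intervals_shrink:
  fixes S :: "nat \<Rightarrow> real set"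
  assumes dec: "decseq S" and ivl: "\<And>n. is_interval (S n)" and p: "\<And>n. p \<in> S n"
    and unique: "\<And>y. (\<And>n. y \<in> S n) \<Longrightarrow> y = p" and "\<epsilon> > 0"
  shows "\<exists>n. S n \<subseteq> ball p \<epsilon>"
proof (rule ccontr)
  assume "\<nexists>n. S n \<subseteq> ball p \<epsilon>"
  then have far: "\<exists>y\<in>S n. \<epsilon> \<le> \<bar>y - p\<bar>" for n
    by (force simp: subset_iff dist_real_def)
  have "p + \<epsilon> \<in> S n \<or> p - \<epsilon> \<in> S n" for n
  proof -
    obtain y where y: "y \<in> S n" "\<epsilon> \<le> \<bar>y - p\<bar>" using far by blast
    have between: "z \<in> S n" if "u \<in> S n" "v \<in> S n" "u \<le> z" "z \<le> v" for u v z
      using ivl[of n] that unfolding is_interval_1 by blast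
    show ?thesis
    proof (cases "p \<le> y")
      case True
      then show ?thesis using between[OF p y(1)] y(2) \<open>\<epsilon> > 0\<close> by auto
    next
      case False
      then show ?thesis using between[OF y(1) p] y(2) \<open>\<epsilon> > 0\<close> by auto
    qed
  qed
  then have "(\<forall>n. p + \<epsilon> \<in> S n) \<or> (\<forall>n. p - \<epsilon> \<in> S n)"
    using dec unfolding decseq_def by (metis max.cobounded1 max.cobounded2 subsetD)
  then show False
    using unique \<open>\<epsilon> > 0\<close> by force
qed

lemma compact_seqspace: "compact (seqspace s)"
proof -
  have "seqspace s = PiE UNIV (\<lambda>_. {..<s})"
    by (auto simp: seqspace_def PiE_UNIV_domain)
  moreover have "compactin (product_topology (\<lambda>_. euclidean) UNIV) (PiE UNIV (\<lambda>_::nat. {..<s::nat}))"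
    by (simp add: compactin_PiE finite_imp_compact)
  ultimately show ?thesis
    by (simp add: euclidean_product_topology)
qed

lemma first_diff_ge_iff:
  assumes "a \<noteq> c"
  shows "n \<le> first_diff a c \<longleftrightarrow> (\<forall>i<n. a i = c i)"
proof
  assume "n \<le> first_diff a c"
  show "\<forall>i<n. a i = c i"
  proof (intro allI impI)
    fix i assume "i < n"
    then have "i < (LEAST k. a k \<noteq> c k)"
      using \<open>n \<le> first_diff a c\<close> unfolding first_diff_def by simp
    then show "a i = c i"
      by (blast dest: not_less_Least)
  qed
next
  obtain j where "a j \<noteq> c j" using assms by auto
  then have "a (first_diff a c) \<noteq> c (first_diff a c)"
    unfolding first_diff_def by (rule LeastI)
  moreover assume "\<forall>i<n. a i = c i"
  ultimately show "n \<le> first_diff a c"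
    by (meson not_le)
qed

text \<open>The hypothesis \<open>a x \<noteq> c\<close> is essential: \<open>first_diff c c\<close> is \<open>LEAST\<close> of an empty predicate.\<close>

lemma tendsto_iff_first_diff_at_top:
  fixes a :: "'a \<Rightarrow> nat \<Rightarrow> nat"
  assumes "\<And>x. a x \<noteq> c"
  shows "(a \<longlongrightarrow> c) F \<longleftrightarrow> filterlim (\<lambda>x. first_diff (a x) c) at_top F"
proof -
  have "filterlim (\<lambda>x. first_diff (a x) c) at_top F \<longleftrightarrow> (\<forall>n. eventually (\<lambda>x. n \<le> first_diff (a x) c) F)"
    by (simp add: filterlim_at_top)
  also have "\<dots> \<longleftrightarrow> (\<forall>n. eventually (\<lambda>x. \<forall>i<n. a x i = c i) F)"
    using first_diff_ge_iff[OF assms] by simp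
  also have "\<dots> \<longleftrightarrow> (\<forall>i. eventually (\<lambda>x. a x i = c i) F)"
  proof
    assume prefixes: "\<forall>n. eventually (\<lambda>x. \<forall>i<n. a x i = c i) F"
    show "\<forall>i. eventually (\<lambda>x. a x i = c i) F"
    proof
      fix i
      show "eventually (\<lambda>x. a x i = c i) F"
        using prefixes[rule_format, of "Suc i"] by (rule eventually_mono) simp
    qed
  next
    assume coordinates: "\<forall>i. eventually (\<lambda>x. a x i = c i) F"
    show "\<forall>n. eventually (\<lambda>x. \<forall>i<n. a x i = c i) F"
    proof
      fix n
      have "eventually (\<lambda>x. \<forall>i\<in>{..<n}. a x i = c i) F"
        using coordinates by (simp add: eventually_ball_finite)
      then show "eventually (\<lambda>x. \<forall>i<n. a x i = c i) F"
        by (rule eventually_mono) simp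
    qed
  qed
  finally show ?thesis by (simp add: tendsto_fun_discrete_iff)
qed

lemma mem_cylinder_prefix_iff:
  assumes "b \<in> seqspace s"
  shows "y \<in> cylinder s g (map b [0..<n]) \<longleftrightarrow> (\<exists>a\<in>seqspace s. (\<forall>i<n. a i = b i) \<and> g a = y)"
proof
  assume "y \<in> cylinder s g (map b [0..<n])"
  then obtain t where t: "t \<in> seqspace s" "y = g (prepend (map b [0..<n]) t)"
    unfolding cylinder_def by auto
  then show "\<exists>a\<in>seqspace s. (\<forall>i<n. a i = b i) \<and> g a = y"
    using assms by (intro bexI[of _ "prepend (map b [0..<n]) t"]) (auto simp: prepend_def seqspace_def)
next
  assume "\<exists>a\<in>seqspace s. (\<forall>i<n. a i = b i) \<and> g a = y"
  then obtain a where a: "a \<in> seqspace s" "\<forall>i<n. a i = b i" "g a = y" by blast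
  then have "prepend (map b [0..<n]) (\<lambda>i. a (n + i)) = a"
    by (auto simp: prepend_def)
  moreover have "(\<lambda>i. a (n + i)) \<in> seqspace s"
    using a(1) by (auto simp: seqspace_def)
  ultimately show "y \<in> cylinder s g (map b [0..<n])"
    unfolding cylinder_def using a(3) by (metis (mono_tags, lifting) mem_Collect_eq)
qed

lemma eq_if_mem_all_cylinders:
  assumes fin: "finite (codes s g y)" and b: "b \<in> seqspace s"
    and mem: "\<And>n. y \<in> cylinder s g (map b [0..<n])"
  shows "g b = y"
proof (rule ccontr)
  assume "g b \<noteq> y"
  then have ne: "a \<noteq> b" if "a \<in> codes s g y" for a
    using that by (auto simp: codes_def)
  define N where "N = Suc (Max ((\<lambda>a. first_diff a b) ` codes s g y))"
  obtain a where a: "a \<in> codes s g y" "\<forall>i<N. a i = b i"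
    using mem[of N] b by (auto simp: mem_cylinder_prefix_iff codes_def)
  then have "N \<le> first_diff a b"
    using first_diff_ge_iff[OF ne] by blast
  moreover have "first_diff a b < N"
    unfolding N_def using fin a(1) by (simp add: le_imp_less_Suc)
  ultimately show False by simp
qed

lemma cylinders_shrink:
  assumes ce: "continuous_encoding s g" and fin: "\<And>y. finite (codes s g y)"
    and b: "b \<in> seqspace s" and "\<epsilon> > 0"
  shows "\<exists>n. cylinder s g (map b [0..<n]) \<subseteq> ball (g b) \<epsilon>"
proof (rule nested_intervals_shrink)
  show "decseq (\<lambda>n. cylinder s g (map b [0..<n]))"
    unfolding decseq_def using b by (auto simp: mem_cylinder_prefix_iff) (metis less_le_trans)
  show "is_interval (cylinder s g (map b [0..<n]))" for n
  proof -
    have "set (map b [0..<n]) \<subseteq> {..<s}"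
      using b by (auto simp: seqspace_def)
    then show ?thesis using ce unfolding continuous_encoding_def by blast
  qed
  show "g b \<in> cylinder s g (map b [0..<n])" for n
    using b by (auto simp: mem_cylinder_prefix_iff)
  show "y = g b" if "\<And>n. y \<in> cylinder s g (map b [0..<n])" for y
    using eq_if_mem_all_cylinders[OF fin b that] by simp
qed (rule \<open>\<epsilon> > 0\<close>)

lemma continuous_on_encoding:
  assumes ce: "continuous_encoding s g" and fin: "\<And>y. finite (codes s g y)"
  shows "continuous_on (seqspace s) g"
  unfolding continuous_on_def tendsto_iff
proof (intro ballI allI impI)
  fix b \<epsilon> assume b: "b \<in> seqspace s" and "(\<epsilon>::real) > 0"
  then obtain n where n: "cylinder s g (map b [0..<n]) \<subseteq> ball (g b) \<epsilon>"
    using cylinders_shrink[OF ce fin] by blast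
  have "eventually (\<lambda>a. a i = b i) (at b within seqspace s)" for i
    using tendsto_ident_at[of b "seqspace s"] by (simp add: tendsto_fun_discrete_iff)
  then have "eventually (\<lambda>a. \<forall>i\<in>{..<n}. a i = b i) (at b within seqspace s)"
    by (simp add: eventually_ball_finite)
  moreover have "eventually (\<lambda>a. a \<in> seqspace s) (at b within seqspace s)"
    by (simp add: eventually_at_filter)
  ultimately show "eventually (\<lambda>a. dist (g a) (g b) < \<epsilon>) (at b within seqspace s)"
  proof eventually_elim
    case (elim a)
    then have "g a \<in> cylinder s g (map b [0..<n])"
      using b by (auto simp: mem_cylinder_prefix_iff)
    then show ?case using n by (auto simp: dist_commute)
  qed
qed

theorem lemma1:
  fixes s :: nat and g :: "(nat \<Rightarrow> nat) \<Rightarrow> real" and x0 :: real and c :: "nat \<Rightarrow> nat"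
    and x :: "nat \<Rightarrow> real" and a :: "nat \<Rightarrow> nat \<Rightarrow> nat"
  assumes "s \<ge> 2"
    and "encoding s g" and "continuous_encoding s g" and "zero_redundancy s g"
    and "x0 \<in> {0..1}" and "unary s g x0" and "c \<in> codes s g x0"
    and "\<And>k. x k \<noteq> x0" and "\<And>k. a k \<in> codes s g (x k)"
  shows "(x \<longlonglongrightarrow> x0) \<longleftrightarrow> filterlim (\<lambda>k. first_diff (a k) c) at_top sequentially"
proof -
  have c: "c \<in> seqspace s" "g c = x0" and a: "a k \<in> seqspace s" "g (a k) = x k" for k
    using assms(7,9) by (auto simp: codes_def)
  have unique: "b = c" if "b \<in> seqspace s" "g b = g c" for b
    using assms(6,7) that unfolding unary_def by (metis card_1_singletonE codes_def mem_Collect_eq singletonD)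
  have cont: "continuous_on (seqspace s) g"
    using assms(3,4) by (simp add: continuous_on_encoding zero_redundancy_def)
  have "(x \<longlonglongrightarrow> x0) \<longleftrightarrow> (a \<longlonglongrightarrow> c)"
  proof
    assume "x \<longlonglongrightarrow> x0"
    then show "a \<longlonglongrightarrow> c"
      by (intro tendsto_compact_unique_preimage[OF compact_seqspace cont unique]) (simp_all add: a c)
  next
    assume "a \<longlonglongrightarrow> c"
    then have "(\<lambda>k. g (a k)) \<longlonglongrightarrow> g c"
      by (rule continuous_on_tendsto_compose[OF cont _ c(1)]) (simp add: a(1))
    then show "x \<longlonglongrightarrow> x0"
      using a c by simp
  qed
  also have "\<dots> \<longleftrightarrow> filterlim (\<lambda>k. first_diff (a k) c) at_top sequentially"
    using assms(8) a(2) c(2) by (intro tendsto_iff_first_diff_at_top) metis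
  finally show ?thesis .
qed

end
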